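(* Let $q_0\in\mathbb{R}$ with $q_0<-\frac{\pi^2}{4}$, and consider the Dirichlet problem $$-y''+q_0\,y=\lambda\, w(x)\,y,\quad -1\le x\le 1,\qquad y(-1)=y(1)=0,$$ where $w(x)=1$ for $x\ge 0$ and $w(x)=-1$ for $x<0$. Then the Richardson number $\lambda^-$ of this problem satisfies $\lambda^-\ge -|q_0|+\frac{\pi^2}{4}$. Equivalently: for every real eigenvalue $\lambda<-|q_0|+\frac{\pi^2}{4}$ of this problem and every corresponding nontrivial eigenfunction $u$, one has $\int_{-1}^1 w(x)|u(x)|^2\,dx<0$.
   Context: Solutions are understood as $C^1$ functions on $[-1,1]$ with absolutely continuous derivative satisfying the equation almost everywhere. For a regular Dirichlet problem $y''+(\lambda w+q)y=0$ on $[a,b]$, $y(a)=y(b)=0$, with real piecewise continuous $w,q$, the Richardson numbers are $$\lambda^+=\inf\Big\{\rho\in\mathbb{R}:\ \text{for every real eigenvalue }\lambda>\rho\text{ and every eigenfunction }u\text{ for }\lambda,\ \int_a^b w|u|^2\,dx>0\Big\},$$ $$\lambda^-=\sup\Big\{\rho\in\mathbb{R}:\ \text{for every real eigenvalue }\lambda<\rho\text{ and every eigenfunction }u\text{ for }\lambda,\ \int_a^b w|u|^2\,dx<0\Big\}.$$ *)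

theory Defs
  imports "HOL-Analysis.Analysis"
begin

definition abs_cont_on :: "real \<Rightarrow> real \<Rightarrow> (real \<Rightarrow> 'a::real_normed_vector) \<Rightarrow> bool" where
  "abs_cont_on a b f \<longleftrightarrow>
     (\<forall>e>0. \<exists>d>0. \<forall>(n::nat) (I :: nat \<Rightarrow> real \<times> real).
        (\<forall>i<n. a \<le> fst (I i) \<and> fst (I i) \<le> snd (I i) \<and> snd (I i) \<le> b) \<and>
        (\<forall>i<n. \<forall>j<n. i \<noteq> j \<longrightarrow> snd (I i) \<le> fst (I j) \<or> snd (I j) \<le> fst (I i)) \<and>
        (\<Sum>i<n. snd (I i) - fst (I i)) < d
        \<longrightarrow> (\<Sum>i<n. norm (f (snd (I i)) - f (fst (I i)))) < e)"

definition is_solution ::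
  "real \<Rightarrow> real \<Rightarrow> (real \<Rightarrow> real) \<Rightarrow> (real \<Rightarrow> real) \<Rightarrow> real \<Rightarrow> (real \<Rightarrow> complex) \<Rightarrow> bool" where
  "is_solution a b w q lam y \<longleftrightarrow>
     (\<exists>y'. (\<forall>x\<in>{a..b}. (y has_vector_derivative y' x) (at x within {a..b})) \<and>
           continuous_on {a..b} y' \<and>
           abs_cont_on a b y' \<and>
           (AE x in lborel. x \<in> {a<..<b} \<longrightarrow>
              (y' has_vector_derivative (- complex_of_real (lam * w x + q x) * y x)) (at x)))"

definition is_eigenfunction ::
  "real \<Rightarrow> real \<Rightarrow> (real \<Rightarrow> real) \<Rightarrow> (real \<Rightarrow> real) \<Rightarrow> real \<Rightarrow> (real \<Rightarrow> complex) \<Rightarrow> bool" where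
  "is_eigenfunction a b w q lam u \<longleftrightarrow>
     is_solution a b w q lam u \<and> u a = 0 \<and> u b = 0 \<and> (\<exists>x\<in>{a..b}. u x \<noteq> 0)"

definition is_eigenvalue ::
  "real \<Rightarrow> real \<Rightarrow> (real \<Rightarrow> real) \<Rightarrow> (real \<Rightarrow> real) \<Rightarrow> real \<Rightarrow> bool" where
  "is_eigenvalue a b w q lam \<longleftrightarrow> (\<exists>u. is_eigenfunction a b w q lam u)"

text \<open>Richardson number lambda^-, as a supremum in the extended reals
  (so that an empty or unbounded set is handled without junk values).\<close>
definition richardson_minus ::
  "real \<Rightarrow> real \<Rightarrow> (real \<Rightarrow> real) \<Rightarrow> (real \<Rightarrow> real) \<Rightarrow> ereal" where
  "richardson_minus a b w q = Sup (ereal ` {\<rho>::real.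
      \<forall>lam u. is_eigenvalue a b w q lam \<and> lam < \<rho> \<and> is_eigenfunction a b w q lam u
        \<longrightarrow> integral {a..b} (\<lambda>x. w x * (cmod (u x))\<^sup>2) < 0})"

end

theory Submission
  imports Defs
begin

text \<open>On each half of $[-1,1]$ the coefficient $\lambda w + q$ is constant, namely
  $\alpha = \lambda - q_0$ on $[0,1]$ and $\beta = -\lambda - q_0$ on $[-1,0]$. Since $u'$ is absolutely
  continuous with a.e. derivative $-\gamma u$, $u$ is in fact $C^2$ on each half, and the Wronskians with
  the fundamental solutions of $y'' = -\gamma y$ show $u(x) = S_\alpha(x-1) A$ on $[0,1]$ and
  $u(x) = S_\beta(x+1) B$ on $[-1,0]$, where $S_\gamma$ is the solution with $S_\gamma(0) = 0$,
  $S_\gamma'(0) = 1$. Matching $u$ and $u'$ at $0$ forces $B = k A$ with $k$ real, so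
  $\int w |u|^2 = |A|^2 (\int_0^1 S_\alpha^2 - k^2 \int_0^1 S_\beta^2)$. Both integrals are explicit,
  and for $\lambda < q_0 + \pi^2/4$ we have $\alpha < \pi^2/4$ and $\beta > |\alpha|$, which makes the
  bracket negative (using $\cos\sqrt\alpha > 0$ and $\tan x \ge x$, resp. $\tanh x \le x$).\<close>

section \<open>Absolutely continuous functions\<close>

definition nonoverlapping_intervals :: "real \<Rightarrow> real \<Rightarrow> nat \<Rightarrow> (nat \<Rightarrow> real \<times> real) \<Rightarrow> bool" where
  "nonoverlapping_intervals a b n I \<longleftrightarrow>
     (\<forall>i<n. a \<le> fst (I i) \<and> fst (I i) \<le> snd (I i) \<and> snd (I i) \<le> b) \<and>
     (\<forall>i<n. \<forall>j<n. i \<noteq> j \<longrightarrow> snd (I i) \<le> fst (I j) \<or> snd (I j) \<le> fst (I i))"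

lemma abs_cont_on_iff:
  "abs_cont_on a b f \<longleftrightarrow> (\<forall>e>0. \<exists>\<delta>>0. \<forall>n I. nonoverlapping_intervals a b n I \<and>
     (\<Sum>i<n. snd (I i) - fst (I i)) < \<delta> \<longrightarrow> (\<Sum>i<n. norm (f (snd (I i)) - f (fst (I i)))) < e)"
  unfolding abs_cont_on_def nonoverlapping_intervals_def by (simp add: conj_assoc)

lemma nonoverlapping_intervals_mono:
  "nonoverlapping_intervals c d n I \<Longrightarrow> a \<le> c \<Longrightarrow> d \<le> b \<Longrightarrow> nonoverlapping_intervals a b n I"
  unfolding nonoverlapping_intervals_def by force

lemma abs_cont_on_subinterval:
  assumes "abs_cont_on a b f" "a \<le> c" "d \<le> b"
  shows "abs_cont_on c d f"
  unfolding abs_cont_on_iff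
proof (intro allI impI)
  fix e :: real
  assume "e > 0"
  then obtain \<delta> where "\<delta> > 0" and \<delta>: "\<forall>n I. nonoverlapping_intervals a b n I \<and>
      (\<Sum>i<n. snd (I i) - fst (I i)) < \<delta> \<longrightarrow> (\<Sum>i<n. norm (f (snd (I i)) - f (fst (I i)))) < e"
    using assms(1) unfolding abs_cont_on_iff by blast
  then show "\<exists>\<delta>>0. \<forall>n I. nonoverlapping_intervals c d n I \<and>
      (\<Sum>i<n. snd (I i) - fst (I i)) < \<delta> \<longrightarrow> (\<Sum>i<n. norm (f (snd (I i)) - f (fst (I i)))) < e"
    using nonoverlapping_intervals_mono[OF _ assms(2,3)] by blast
qed

lemma abs_cont_on_diff:
  fixes f g :: "real \<Rightarrow> 'a::real_normed_vector"
  assumes f: "abs_cont_on a b f" and g: "abs_cont_on a b g"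
  shows "abs_cont_on a b (\<lambda>x. f x - g x)"
  unfolding abs_cont_on_iff
proof (intro allI impI)
  fix e :: real
  assume "e > 0"
  then have "e / 2 > 0" by simp
  obtain \<delta>1 where "\<delta>1 > 0" and \<delta>1: "\<forall>n I. nonoverlapping_intervals a b n I \<and>
      (\<Sum>i<n. snd (I i) - fst (I i)) < \<delta>1 \<longrightarrow> (\<Sum>i<n. norm (f (snd (I i)) - f (fst (I i)))) < e / 2"
    using f \<open>e / 2 > 0\<close> unfolding abs_cont_on_iff by blast
  obtain \<delta>2 where "\<delta>2 > 0" and \<delta>2: "\<forall>n I. nonoverlapping_intervals a b n I \<and>
      (\<Sum>i<n. snd (I i) - fst (I i)) < \<delta>2 \<longrightarrow> (\<Sum>i<n. norm (g (snd (I i)) - g (fst (I i)))) < e / 2"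
    using g \<open>e / 2 > 0\<close> unfolding abs_cont_on_iff by blast
  show "\<exists>\<delta>>0. \<forall>n I. nonoverlapping_intervals a b n I \<and> (\<Sum>i<n. snd (I i) - fst (I i)) < \<delta> \<longrightarrow>
      (\<Sum>i<n. norm (f (snd (I i)) - g (snd (I i)) - (f (fst (I i)) - g (fst (I i))))) < e"
  proof (intro exI[of _ "min \<delta>1 \<delta>2"] conjI allI impI)
    fix n I
    assume I: "nonoverlapping_intervals a b n I \<and> (\<Sum>i<n. snd (I i) - fst (I i)) < min \<delta>1 \<delta>2"
    have "(\<Sum>i<n. norm (f (snd (I i)) - g (snd (I i)) - (f (fst (I i)) - g (fst (I i)))))
       \<le> (\<Sum>i<n. norm (f (snd (I i)) - f (fst (I i))) + norm (g (snd (I i)) - g (fst (I i))))"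
    proof (intro sum_mono)
      fix i
      have "f (snd (I i)) - g (snd (I i)) - (f (fst (I i)) - g (fst (I i)))
          = (f (snd (I i)) - f (fst (I i))) - (g (snd (I i)) - g (fst (I i)))"
        by (simp add: algebra_simps)
      then show "norm (f (snd (I i)) - g (snd (I i)) - (f (fst (I i)) - g (fst (I i))))
          \<le> norm (f (snd (I i)) - f (fst (I i))) + norm (g (snd (I i)) - g (fst (I i)))"
        by (metis norm_triangle_ineq4)
    qed
    also have "\<dots> < e"
      using \<delta>1[rule_format, of n I] \<delta>2[rule_format, of n I] I by (simp add: sum.distrib)
    finally show "(\<Sum>i<n. norm (f (snd (I i)) - g (snd (I i)) - (f (fst (I i)) - g (fst (I i))))) < e" .
  qed (use \<open>\<delta>1 > 0\<close> \<open>\<delta>2 > 0\<close> in auto)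
qed

lemma abs_cont_on_lipschitz:
  fixes f :: "real \<Rightarrow> 'a::real_normed_vector"
  assumes L: "\<And>x y. a \<le> x \<Longrightarrow> x \<le> y \<Longrightarrow> y \<le> b \<Longrightarrow> norm (f y - f x) \<le> L * (y - x)"
    and "L \<ge> 0"
  shows "abs_cont_on a b f"
  unfolding abs_cont_on_iff
proof (intro allI impI)
  fix e :: real
  assume "e > 0"
  show "\<exists>\<delta>>0. \<forall>n I. nonoverlapping_intervals a b n I \<and> (\<Sum>i<n. snd (I i) - fst (I i)) < \<delta> \<longrightarrow>
      (\<Sum>i<n. norm (f (snd (I i)) - f (fst (I i)))) < e"
  proof (intro exI[of _ "e / (L + 1)"] conjI allI impI)
    show "e / (L + 1) > 0" using \<open>e > 0\<close> \<open>L \<ge> 0\<close> by simp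
    fix n I
    assume I: "nonoverlapping_intervals a b n I \<and> (\<Sum>i<n. snd (I i) - fst (I i)) < e / (L + 1)"
    then have len: "0 \<le> (\<Sum>i<n. snd (I i) - fst (I i))"
      unfolding nonoverlapping_intervals_def by (intro sum_nonneg) auto
    have "(\<Sum>i<n. norm (f (snd (I i)) - f (fst (I i)))) \<le> (\<Sum>i<n. L * (snd (I i) - fst (I i)))"
      using I unfolding nonoverlapping_intervals_def by (intro sum_mono L) auto
    also have "\<dots> \<le> (L + 1) * (\<Sum>i<n. snd (I i) - fst (I i))"
      using len by (simp add: sum_distrib_left[symmetric] distrib_right)
    also have "\<dots> < e"
      using I \<open>L \<ge> 0\<close> by (simp add: pos_less_divide_eq mult.commute)
    finally show "(\<Sum>i<n. norm (f (snd (I i)) - f (fst (I i)))) < e" .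
  qed
qed

lemma disjoint_open_intervals_separated:
  fixes l1 r1 l2 r2 :: real
  assumes "l1 < r1" "l2 < r2" "{l1<..<r1} \<inter> {l2<..<r2} = {}"
  shows "r1 \<le> l2 \<or> r2 \<le> l1"
proof (rule ccontr)
  assume "\<not> (r1 \<le> l2 \<or> r2 \<le> l1)"
  with assms(1,2) have "(max l1 l2 + min r1 r2) / 2 \<in> {l1<..<r1} \<inter> {l2<..<r2}" by auto
  with assms(3) show False by blast
qed

lemma tagged_division_of_real_intervalD:
  fixes c d :: real
  assumes "p tagged_division_of {c..d}" "(x, K) \<in> p"
  shows "K = {Inf K..Sup K}" "Inf K \<le> x" "x \<le> Sup K" "c \<le> Inf K" "Sup K \<le> d"
    and "Inf K \<le> Sup K"
proof -
  obtain a b where K: "K = {a..b}" using tagged_division_ofD(4)[OF assms] by (auto simp: box_real)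
  moreover have "x \<in> K" "K \<subseteq> {c..d}" using tagged_division_ofD(2,3)[OF assms] by auto
  ultimately show "K = {Inf K..Sup K}" "Inf K \<le> x" "x \<le> Sup K" "c \<le> Inf K" "Sup K \<le> d"
    and "Inf K \<le> Sup K"
    by auto
qed

lemma sum_interval_lengths_le_emeasure:
  fixes l r :: "'i \<Rightarrow> real"
  assumes "finite S" "U \<in> sets lborel"
    and "\<And>i. i \<in> S \<Longrightarrow> l i \<le> r i" "\<And>i. i \<in> S \<Longrightarrow> {l i<..<r i} \<subseteq> U"
    and "\<And>i j. i \<in> S \<Longrightarrow> j \<in> S \<Longrightarrow> i \<noteq> j \<Longrightarrow> {l i<..<r i} \<inter> {l j<..<r j} = {}"
  shows "ennreal (\<Sum>i\<in>S. r i - l i) \<le> emeasure lborel U"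
proof -
  have "ennreal (\<Sum>i\<in>S. r i - l i) = (\<Sum>i\<in>S. ennreal (r i - l i))"
    using assms(3) by (intro sum_ennreal[symmetric]) simp
  also have "\<dots> = (\<Sum>i\<in>S. emeasure lborel {l i<..<r i})"
    using assms(3) by (intro sum.cong) simp_all
  also have "\<dots> = emeasure lborel (\<Union>i\<in>S. {l i<..<r i})"
    using assms(1,5) by (intro sum_emeasure) (auto simp: disjoint_family_on_def)
  also have "\<dots> \<le> emeasure lborel U"
    using assms(2,4) by (intro emeasure_mono) auto
  finally show ?thesis .
qed

lemma nonoverlapping_intervals_enumeration:
  assumes f: "bij_betw f {..<n} S"
    and lr: "\<And>i. i \<in> S \<Longrightarrow> c \<le> l i \<and> l i < r i \<and> r i \<le> d"
    and disj: "\<And>i j. i \<in> S \<Longrightarrow> j \<in> S \<Longrightarrow> i \<noteq> j \<Longrightarrow> {l i<..<r i} \<inter> {l j<..<r j} = {}"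
  shows "nonoverlapping_intervals c d n (\<lambda>k. (l (f k), r (f k)))"
  unfolding nonoverlapping_intervals_def fst_conv snd_conv
proof (intro conjI allI impI)
  fix k
  assume "k < n"
  then show "c \<le> l (f k)" "l (f k) \<le> r (f k)" "r (f k) \<le> d"
    using f lr[of "f k"] by (auto simp: bij_betw_def)
next
  fix k k'
  assume "k < n" "k' < n" "k \<noteq> k'"
  then have "f k \<in> S" "f k' \<in> S" "f k \<noteq> f k'"
    using f by (auto simp: bij_betw_def inj_on_def)
  then show "r (f k) \<le> l (f k') \<or> r (f k') \<le> l (f k)"
    using lr by (intro disjoint_open_intervals_separated disj) auto
qed

lemma abs_cont_on_finite_family:
  fixes h :: "real \<Rightarrow> 'a::real_normed_vector"
  assumes "abs_cont_on c d h" "e > 0"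
  shows "\<exists>\<delta>>0. \<forall>S l r. finite S \<and> (\<forall>i\<in>S. c \<le> l i \<and> l i \<le> r i \<and> r i \<le> d) \<and>
    (\<forall>i\<in>S. \<forall>j\<in>S. i \<noteq> j \<longrightarrow> {l i<..<r i} \<inter> {l j<..<r j} = {}) \<and> (\<Sum>i\<in>S. r i - l i) < \<delta>
    \<longrightarrow> (\<Sum>i\<in>S. norm (h (r i) - h (l i))) < e"
proof -
  obtain \<delta> where "\<delta> > 0" and \<delta>: "\<forall>n I. nonoverlapping_intervals c d n I \<and>
      (\<Sum>i<n. snd (I i) - fst (I i)) < \<delta> \<longrightarrow> (\<Sum>i<n. norm (h (snd (I i)) - h (fst (I i)))) < e"
    using assms unfolding abs_cont_on_iff by blast
  show ?thesis
  proof (intro exI[of _ \<delta>] conjI allI impI)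
    fix S :: "'b set" and l r :: "'b \<Rightarrow> real"
    assume "finite S \<and> (\<forall>i\<in>S. c \<le> l i \<and> l i \<le> r i \<and> r i \<le> d) \<and>
      (\<forall>i\<in>S. \<forall>j\<in>S. i \<noteq> j \<longrightarrow> {l i<..<r i} \<inter> {l j<..<r j} = {}) \<and> (\<Sum>i\<in>S. r i - l i) < \<delta>"
    then have S: "finite S" and lr: "\<And>i. i \<in> S \<Longrightarrow> c \<le> l i \<and> l i \<le> r i \<and> r i \<le> d"
      and disj: "\<And>i j. i \<in> S \<Longrightarrow> j \<in> S \<Longrightarrow> i \<noteq> j \<Longrightarrow> {l i<..<r i} \<inter> {l j<..<r j} = {}"
      and small: "(\<Sum>i\<in>S. r i - l i) < \<delta>"
      by auto
    \<comment> \<open>degenerate intervals contribute nothing but need not be separated from the others\<close>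
    define S' where "S' = {i \<in> S. l i < r i}"
    have "finite S'" using S by (simp add: S'_def)
    then obtain f where f: "bij_betw f {..<card S'} S'"
      using ex_bij_betw_nat_finite lessThan_atLeast0 by metis
    have "nonoverlapping_intervals c d (card S') (\<lambda>k. (l (f k), r (f k)))"
      using f lr disj by (intro nonoverlapping_intervals_enumeration) (auto simp: S'_def)
    moreover have reindex: "(\<Sum>k<card S'. u (l (f k)) (r (f k))) = (\<Sum>i\<in>S'. u (l i) (r i))"
      for u :: "real \<Rightarrow> real \<Rightarrow> real"
      using sum.reindex_bij_betw[OF f, of "\<lambda>i. u (l i) (r i)"] by simp
    moreover have "(\<Sum>i\<in>S'. r i - l i) \<le> (\<Sum>i\<in>S. r i - l i)"
      using S lr by (intro sum_mono2) (auto simp: S'_def)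
    ultimately have "(\<Sum>k<card S'. norm (h (r (f k)) - h (l (f k)))) < e"
      using \<delta> small reindex[of "\<lambda>x y. y - x"] by fastforce
    then have "(\<Sum>i\<in>S'. norm (h (r i) - h (l i))) < e"
      using reindex[of "\<lambda>x y. norm (h y - h x)"] by simp
    moreover have "(\<Sum>i\<in>S'. norm (h (r i) - h (l i))) = (\<Sum>i\<in>S. norm (h (r i) - h (l i)))"
    proof (intro sum.mono_neutral_left ballI)
      fix i
      assume "i \<in> S - S'"
      with lr have "l i = r i" by (fastforce simp: S'_def)
      then show "norm (h (r i) - h (l i)) = 0" by simp
    qed (use S in \<open>auto simp: S'_def\<close>)
    ultimately show "(\<Sum>i\<in>S. norm (h (r i) - h (l i))) < e" by simp
  qed (fact \<open>\<delta> > 0\<close>)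
qed

lemma null_set_open_cover:
  assumes "B \<in> null_sets lborel" "0 < (e::real)"
  obtains U :: "'a::euclidean_space set" where "open U" "B \<subseteq> U" "emeasure lborel U < e"
proof -
  have B: "B \<in> sets borel" using assms(1) by (auto simp: null_sets_def)
  obtain U where U: "open U" "B \<subseteq> U" "emeasure lborel (U - B) < e"
    using outer_regular_lborel[OF B assms(2)] by blast
  have "emeasure lborel U = emeasure lborel ((U - B) \<union> B)"
    using U(2) by (simp add: Un_absorb2)
  also have "\<dots> = emeasure lborel (U - B)"
    using U(1) assms(1) B by (intro emeasure_Un_null_set) auto
  finally show thesis using that U by simp
qed

lemma gauge_zero_derivative:
  fixes h :: "real \<Rightarrow> 'a::real_normed_vector"
  assumes "open U" "B \<subseteq> U" "e > 0"
    and der: "\<And>x. x \<in> A - B \<Longrightarrow> (h has_vector_derivative 0) (at x)"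
  shows "\<exists>\<rho>. (\<forall>x. \<rho> x > 0) \<and> (\<forall>x\<in>B. ball x (\<rho> x) \<subseteq> U) \<and>
    (\<forall>x\<in>A - B. \<forall>y. \<bar>y - x\<bar> < \<rho> x \<longrightarrow> norm (h y - h x) \<le> e * \<bar>y - x\<bar>)"
proof -
  have "\<exists>r>0. (x \<in> B \<longrightarrow> ball x r \<subseteq> U) \<and>
      (x \<in> A - B \<longrightarrow> (\<forall>y. \<bar>y - x\<bar> < r \<longrightarrow> norm (h y - h x) \<le> e * \<bar>y - x\<bar>))" for x
  proof (cases "x \<in> B")
    case True
    then obtain r where "r > 0" "ball x r \<subseteq> U"
      using assms(1,2) open_contains_ball by blast
    with True show ?thesis by blast
  next
    case False
    show ?thesis
    proof (cases "x \<in> A")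
      case True
      with False have "(h has_derivative (\<lambda>y. 0)) (at x)"
        using der[of x] by (simp add: has_vector_derivative_def)
      with \<open>e > 0\<close> obtain r where "r > 0" "\<forall>y. \<bar>y - x\<bar> < r \<longrightarrow> norm (h y - h x) \<le> e * \<bar>y - x\<bar>"
        unfolding has_derivative_at_alt by auto
      with False show ?thesis by blast
    qed (use False in \<open>intro exI[of _ 1], auto\<close>)
  qed
  then show ?thesis by metis
qed

lemma tagged_division_open_intervals_disjoint:
  fixes c d :: real
  assumes "p tagged_division_of {c..d}" "i \<in> p" "j \<in> p" "i \<noteq> j"
  shows "{Inf (snd i)<..<Sup (snd i)} \<inter> {Inf (snd j)<..<Sup (snd j)} = {}"
  using tagged_division_ofD(5)[OF assms(1), of "fst i" "snd i" "fst j" "snd j"] assms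
    tagged_division_of_real_intervalD(1)[OF assms(1), of "fst i" "snd i"]
    tagged_division_of_real_intervalD(1)[OF assms(1), of "fst j" "snd j"]
  by (metis interior_atLeastAtMost_real prod.collapse)

lemma tagged_division_sum_variation_le:
  fixes h :: "real \<Rightarrow> 'a::real_normed_vector"
  assumes cd: "c \<le> d" and p: "p tagged_division_of {c..d}" and "S \<subseteq> p" "e \<ge> 0"
    and local: "\<And>x K y. (x, K) \<in> S \<Longrightarrow> y \<in> K \<Longrightarrow> norm (h y - h x) \<le> e * \<bar>y - x\<bar>"
  shows "(\<Sum>(x, K)\<in>S. norm (h (Sup K) - h (Inf K))) \<le> e * (d - c)"
proof -
  note K = tagged_division_of_real_intervalD[OF p]
  have "(\<Sum>(x, K)\<in>S. norm (h (Sup K) - h (Inf K))) \<le> (\<Sum>(x, K)\<in>S. e * (Sup K - Inf K))"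
  proof (rule sum_mono)
    fix xK
    assume "xK \<in> S"
    moreover obtain x K where [simp]: "xK = (x, K)" by fastforce
    ultimately have xK: "(x, K) \<in> S" "(x, K) \<in> p" using \<open>S \<subseteq> p\<close> by auto
    have "Sup K \<in> K" "Inf K \<in> K"
      using K(1)[OF xK(2)] K(6)[OF xK(2)] by (metis atLeastAtMost_iff order.refl)+
    then have "norm (h (Sup K) - h x) \<le> e * (Sup K - x)" "norm (h x - h (Inf K)) \<le> e * (x - Inf K)"
      using local[OF xK(1), of "Sup K"] local[OF xK(1), of "Inf K"] K(2,3)[OF xK(2)]
      by (simp_all add: norm_minus_commute)
    then show "(case xK of (x, K) \<Rightarrow> norm (h (Sup K) - h (Inf K))) \<le> (case xK of (x, K) \<Rightarrow> e * (Sup K - Inf K))"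
      using norm_diff_triangle_le by (fastforce simp: algebra_simps)
  qed
  also have "\<dots> \<le> (\<Sum>(x, K)\<in>p. e * (Sup K - Inf K))"
    using tagged_division_ofD(1)[OF p] \<open>S \<subseteq> p\<close> \<open>e \<ge> 0\<close> K(6) by (intro sum_mono2) auto
  also have "\<dots> = e * (d - c)"
    using additive_tagged_division_1[OF cd p, of "\<lambda>x. x"]
    by (simp add: sum_distrib_left[symmetric] case_prod_unfold)
  finally show ?thesis .
qed

lemma tagged_division_sum_length_le_emeasure:
  fixes c d :: real
  assumes p: "p tagged_division_of {c..d}" and "S \<subseteq> p" "U \<in> sets lborel"
    and "\<And>x K. (x, K) \<in> S \<Longrightarrow> K \<subseteq> U"
  shows "ennreal (\<Sum>(x, K)\<in>S. Sup K - Inf K) \<le> emeasure lborel U"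
  unfolding case_prod_unfold
proof (rule sum_interval_lengths_le_emeasure)
  fix i
  assume "i \<in> S"
  moreover obtain x K where [simp]: "i = (x, K)" by fastforce
  ultimately have xK: "(x, K) \<in> S" "(x, K) \<in> p" using \<open>S \<subseteq> p\<close> by auto
  note K = tagged_division_of_real_intervalD[OF p xK(2)]
  show "Inf (snd i) \<le> Sup (snd i)" using K(2,3) by simp
  show "{Inf (snd i)<..<Sup (snd i)} \<subseteq> U" using assms(4)[OF xK(1)] K(1) by auto
next
  fix i j
  assume "i \<in> S" "j \<in> S" "i \<noteq> j"
  then show "{Inf (snd i)<..<Sup (snd i)} \<inter> {Inf (snd j)<..<Sup (snd j)} = {}"
    using tagged_division_open_intervals_disjoint[OF p] \<open>S \<subseteq> p\<close> by blast
qed (use assms(2,3) finite_subset tagged_division_ofD(1)[OF p] in auto)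

lemma abs_cont_on_tagged_subdivision:
  fixes h :: "real \<Rightarrow> 'a::real_normed_vector"
  assumes "abs_cont_on c d h" "e > 0"
  shows "\<exists>\<delta>>0. \<forall>p S. p tagged_division_of {c..d} \<and> S \<subseteq> p \<and> (\<Sum>(x, K)\<in>S. Sup K - Inf K) < \<delta>
    \<longrightarrow> (\<Sum>(x, K)\<in>S. norm (h (Sup K) - h (Inf K))) < e"
proof -
  obtain \<delta> where "\<delta> > 0" and \<delta>: "\<forall>(S :: (real \<times> real set) set) l r. finite S \<and>
      (\<forall>i\<in>S. c \<le> l i \<and> l i \<le> r i \<and> r i \<le> d) \<and>
      (\<forall>i\<in>S. \<forall>j\<in>S. i \<noteq> j \<longrightarrow> {l i<..<r i} \<inter> {l j<..<r j} = {}) \<and> (\<Sum>i\<in>S. r i - l i) < \<delta>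
      \<longrightarrow> (\<Sum>i\<in>S. norm (h (r i) - h (l i))) < e"
    using abs_cont_on_finite_family[OF assms, where 'b = "real \<times> real set"] by blast
  show ?thesis
  proof (intro exI[of _ \<delta>] conjI allI impI)
    fix p S
    assume "p tagged_division_of {c..d} \<and> S \<subseteq> p \<and> (\<Sum>(x, K)\<in>S. Sup K - Inf K) < \<delta>"
    then have p: "p tagged_division_of {c..d}" and "S \<subseteq> p"
      and small: "(\<Sum>i\<in>S. Sup (snd i) - Inf (snd i)) < \<delta>"
      by (auto simp: case_prod_unfold)
    then show "(\<Sum>(x, K)\<in>S. norm (h (Sup K) - h (Inf K))) < e"
      unfolding case_prod_unfold
    proof (intro \<delta>[rule_format] conjI ballI impI)
      fix i
      assume "i \<in> S"
      with \<open>S \<subseteq> p\<close> have "(fst i, snd i) \<in> p" by auto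
      from tagged_division_of_real_intervalD[OF p this]
      show "c \<le> Inf (snd i)" "Inf (snd i) \<le> Sup (snd i)" "Sup (snd i) \<le> d" by auto
    next
      fix i j
      assume "i \<in> S" "j \<in> S" "i \<noteq> j"
      with \<open>S \<subseteq> p\<close> show "{Inf (snd i)<..<Sup (snd i)} \<inter> {Inf (snd j)<..<Sup (snd j)} = {}"
        by (intro tagged_division_open_intervals_disjoint[OF p]) auto
    qed (use tagged_division_ofD(1)[OF p] finite_subset in auto)
  qed (fact \<open>\<delta> > 0\<close>)
qed

lemma abs_cont_on_ae_zero_derivative_bound:
  fixes h :: "real \<Rightarrow> 'a::real_normed_vector"
  assumes cd: "c \<le> d" and ac: "abs_cont_on c d h" and N: "N \<in> null_sets lborel"
    and der: "\<And>x. x \<in> {c<..<d} \<Longrightarrow> x \<notin> N \<Longrightarrow> (h has_vector_derivative 0) (at x)"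
    and e: "e > 0"
  shows "norm (h d - h c) \<le> e * (d - c) + e"
proof -
  obtain \<delta> where "\<delta> > 0" and \<delta>: "\<And>S. S \<subseteq> p \<Longrightarrow> p tagged_division_of {c..d} \<Longrightarrow>
      (\<Sum>(x, K)\<in>S. Sup K - Inf K) < \<delta> \<Longrightarrow> (\<Sum>(x, K)\<in>S. norm (h (Sup K) - h (Inf K))) < e" for p
    using abs_cont_on_tagged_subdivision[OF ac e] by blast
  \<comment> \<open>In a fine tagged division, intervals tagged outside the null set B contribute at most
    e times their length, while those tagged in B lie in U, which is too small for the modulus \<delta>.\<close>
  define B where "B = N \<union> {c, d}"
  have "B \<in> null_sets lborel"
    unfolding B_def using N by (intro null_sets.Un) (auto intro: finite_imp_null_set_lborel)
  then obtain U where U: "open U" "B \<subseteq> U" "emeasure lborel U < \<delta>"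
    using null_set_open_cover \<open>\<delta> > 0\<close> by blast
  have "x \<in> {c<..<d}" "x \<notin> N" if "x \<in> {c..d} - B" for x
    using that by (auto simp: B_def)
  then obtain \<rho> where \<rho>: "\<And>x. \<rho> x > 0" "\<And>x. x \<in> B \<Longrightarrow> ball x (\<rho> x) \<subseteq> U"
    "\<And>x y. x \<in> {c..d} - B \<Longrightarrow> \<bar>y - x\<bar> < \<rho> x \<Longrightarrow> norm (h y - h x) \<le> e * \<bar>y - x\<bar>"
    using gauge_zero_derivative[OF U(1,2) e, of "{c..d}" h] der by metis
  obtain p where p: "p tagged_division_of {c..d}" and fine: "(\<lambda>x. ball x (\<rho> x)) fine p"
    using fine_division_exists_real[OF gauge_ball_dependent] \<rho>(1) by blast
  have K_ball: "K \<subseteq> ball x (\<rho> x)" if "(x, K) \<in> p" for x K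
    using fine that by (auto simp: fine_def)
  define G where "G = {(x, K :: real set). x \<notin> B}"
  define var where "var = (\<lambda>(x :: real, K). norm (h (Sup K) - h (Inf K)))"
  have "norm (h d - h c) = norm (\<Sum>(x, K)\<in>p. h (Sup K) - h (Inf K))"
    using additive_tagged_division_1[OF cd p, of h] by simp
  also have "\<dots> \<le> sum var p"
    unfolding var_def by (rule norm_sum[THEN order_trans]) (simp add: case_prod_unfold)
  also have "\<dots> = sum var (p \<inter> G) + sum var (p - G)"
    using tagged_division_ofD(1)[OF p] by (rule sum.Int_Diff)
  also have "sum var (p \<inter> G) \<le> e * (d - c)"
    unfolding var_def
  proof (rule tagged_division_sum_variation_le[OF cd p])
    fix x K y
    assume "(x, K) \<in> p \<inter> G" "y \<in> K"
    then have "x \<in> {c..d} - B" "\<bar>y - x\<bar> < \<rho> x"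
      using K_ball[of x K] tagged_division_ofD(2,3)[OF p, of x K] by (auto simp: G_def dist_real_def)
    then show "norm (h y - h x) \<le> e * \<bar>y - x\<bar>" by (rule \<rho>(3))
  qed (use e in auto)
  also have "sum var (p - G) < e"
    unfolding var_def
  proof (rule \<delta>[OF _ p])
    have "K \<subseteq> U" if "(x, K) \<in> p - G" for x K
      using that K_ball[of x K] \<rho>(2)[of x] by (auto simp: G_def)
    then have "ennreal (\<Sum>(x, K)\<in>p - G. Sup K - Inf K) \<le> emeasure lborel U"
      using U(1) by (intro tagged_division_sum_length_le_emeasure[OF p]) auto
    also have "\<dots> < \<delta>" by (fact U(3))
    finally show "(\<Sum>(x, K)\<in>p - G. Sup K - Inf K) < \<delta>"
      using tagged_division_of_real_intervalD(6)[OF p]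
      by (subst (asm) ennreal_less_iff) (auto simp: case_prod_unfold intro!: sum_nonneg)
  qed auto
  finally show ?thesis by simp
qed

lemma abs_cont_on_ae_zero_derivative_const:
  fixes h :: "real \<Rightarrow> 'a::real_normed_vector"
  assumes "c \<le> d" "abs_cont_on c d h" "N \<in> null_sets lborel"
    and "\<And>x. x \<in> {c<..<d} \<Longrightarrow> x \<notin> N \<Longrightarrow> (h has_vector_derivative 0) (at x)"
  shows "h d = h c"
proof -
  have "norm (h d - h c) \<le> 0 + e" if "e > 0" for e
  proof -
    have "norm (h d - h c) \<le> e / (d - c + 1) * (d - c) + e / (d - c + 1)"
      using that assms by (intro abs_cont_on_ae_zero_derivative_bound) auto
    also have "\<dots> = e / (d - c + 1) * (d - c + 1)"
      by (simp add: distrib_left)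
    also have "\<dots> = e"
      using assms(1) by simp
    finally show ?thesis by simp
  qed
  then show ?thesis
    using field_le_epsilon[of "norm (h d - h c)" 0] by simp
qed

lemma abs_cont_on_integral:
  fixes g :: "real \<Rightarrow> 'a::banach"
  assumes "continuous_on {c..d} g"
  shows "abs_cont_on c d (\<lambda>t. integral {c..t} g)"
proof -
  obtain L where L: "L > 0" "\<And>y. y \<in> g ` {c..d} \<Longrightarrow> norm y \<le> L"
    using compact_imp_bounded[OF compact_continuous_image[OF assms compact_Icc]]
    by (auto simp: bounded_pos)
  show ?thesis
  proof (rule abs_cont_on_lipschitz[of c d _ L])
    fix u v
    assume uv: "c \<le> u" "u \<le> v" "v \<le> d"
    then have "g integrable_on {c..v}" and guv: "continuous_on {u..v} g"
      by (auto intro!: integrable_continuous_real continuous_on_subset[OF assms])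
    with uv have "integral {c..v} g - integral {c..u} g = integral {u..v} g"
      using Henstock_Kurzweil_Integration.integral_combine[of c u v g] by (simp add: algebra_simps)
    moreover have "norm (integral {u..v} g) \<le> L * (v - u)"
      using uv L guv by (intro integral_bound) auto
    ultimately show "norm (integral {c..v} g - integral {c..u} g) \<le> L * (v - u)" by simp
  qed (use L in simp)
qed

lemma abs_cont_on_ae_derivative_continuous:
  fixes f g :: "real \<Rightarrow> 'a::banach"
  assumes ac: "abs_cont_on c d f" and g: "continuous_on {c..d} g" and N: "N \<in> null_sets lborel"
    and der: "\<And>x. x \<in> {c<..<d} \<Longrightarrow> x \<notin> N \<Longrightarrow> (f has_vector_derivative g x) (at x)"
    and x: "x \<in> {c..d}"
  shows "(f has_vector_derivative g x) (at x within {c..d})"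
proof -
  define G where "G t = integral {c..t} g" for t
  have G: "(G has_vector_derivative g t) (at t within {c..d})" if "t \<in> {c..d}" for t
    unfolding G_def using integral_has_vector_derivative[OF g that] .
  have "f t - G t = f c - G c" if t: "t \<in> {c..d}" for t
  proof (rule abs_cont_on_ae_zero_derivative_const[where N = N])
    show "abs_cont_on c t (\<lambda>s. f s - G s)"
      using t abs_cont_on_subinterval[OF abs_cont_on_integral[OF g], of c t]
      by (intro abs_cont_on_diff abs_cont_on_subinterval[OF ac]) (auto simp: G_def)
    fix s
    assume s: "s \<in> {c<..<t}" "s \<notin> N"
    then have "(G has_vector_derivative g s) (at s)"
      using t G[of s] at_within_interior[of s "{c..d}"] by auto
    with s t der[of s] show "((\<lambda>s. f s - G s) has_vector_derivative 0) (at s)"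
      using has_vector_derivative_diff by fastforce
  qed (use t N in auto)
  then have "f t = (f c - G c) + G t" if "t \<in> {c..d}" for t
    using that by (simp add: algebra_simps)
  moreover have "((\<lambda>t. (f c - G c) + G t) has_vector_derivative g x) (at x within {c..d})"
    using G[OF x] by (auto intro: derivative_eq_intros)
  ultimately show ?thesis
    using has_vector_derivative_transform[OF x] by metis
qed

section \<open>Harmonic sine and cosine\<close>

text \<open>\<open>hsin g\<close> and \<open>hcos g\<close> solve $y'' = -g y$ with $(y, y')(0) = (0, 1)$, resp. $(1, 0)$;
  \<open>hsin_sq_primitive g\<close> is the primitive of $(\<open>hsin g\<close>)^2$ vanishing at $0$.\<close>

definition hsin :: "real \<Rightarrow> real \<Rightarrow> real" where
  "hsin g t = (if g > 0 then sin (sqrt g * t) / sqrt g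
     else if g < 0 then sinh (sqrt (-g) * t) / sqrt (-g) else t)"

definition hcos :: "real \<Rightarrow> real \<Rightarrow> real" where
  "hcos g t = (if g > 0 then cos (sqrt g * t) else if g < 0 then cosh (sqrt (-g) * t) else 1)"

definition hsin_sq_primitive :: "real \<Rightarrow> real \<Rightarrow> real" where
  "hsin_sq_primitive g t = (if g = 0 then t ^ 3 / 3 else (t - hsin g t * hcos g t) / (2 * g))"

lemma hsin_pos: "0 < g \<Longrightarrow> hsin g = (\<lambda>t. sin (sqrt g * t) / sqrt g)"
  and hcos_pos: "0 < g \<Longrightarrow> hcos g = (\<lambda>t. cos (sqrt g * t))"
  and hsin_neg: "g < 0 \<Longrightarrow> hsin g = (\<lambda>t. sinh (sqrt (- g) * t) / sqrt (- g))"
  and hcos_neg: "g < 0 \<Longrightarrow> hcos g = (\<lambda>t. cosh (sqrt (- g) * t))"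
  and hsin_zero [simp]: "hsin 0 = (\<lambda>t. t)"
  and hcos_zero [simp]: "hcos 0 = (\<lambda>t. 1)"
  by (auto simp: hsin_def hcos_def)

lemma hsin_0 [simp]: "hsin g 0 = 0" and hcos_0 [simp]: "hcos g 0 = 1"
  and hsin_sq_primitive_0 [simp]: "hsin_sq_primitive g 0 = 0"
  by (auto simp: hsin_def hcos_def hsin_sq_primitive_def)

lemma hsin_minus [simp]: "hsin g (- t) = - hsin g t"
  and hcos_minus [simp]: "hcos g (- t) = hcos g t"
  and hsin_sq_primitive_minus [simp]: "hsin_sq_primitive g (- t) = - hsin_sq_primitive g t"
  by (auto simp: hsin_def hcos_def hsin_sq_primitive_def field_simps)

lemma hcos_sq_plus_hsin_sq: "(hcos g t)\<^sup>2 + g * (hsin g t)\<^sup>2 = 1"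
proof -
  consider "g > 0" | "g < 0" | "g = 0" by linarith
  then show ?thesis
  proof cases
    case 1
    then show ?thesis by (simp add: hsin_pos hcos_pos power_divide)
  next
    case 2
    then have "g * (sinh (sqrt (-g) * t) / sqrt (-g))\<^sup>2 = - (sinh (sqrt (-g) * t))\<^sup>2"
      by (simp add: power_divide)
    with 2 show ?thesis by (simp add: hsin_neg hcos_neg cosh_square_eq)
  qed simp
qed

lemma has_real_derivative_hsin: "(hsin g has_real_derivative hcos g t) (at t within s)"
proof -
  consider "g > 0" | "g < 0" | "g = 0" by linarith
  then show ?thesis
    by cases (auto simp: hsin_pos hcos_pos hsin_neg hcos_neg mult.assoc intro!: derivative_eq_intros)
qed

lemma has_real_derivative_hcos: "(hcos g has_real_derivative - g * hsin g t) (at t within s)"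
proof -
  consider "g > 0" | "g < 0" | "g = 0" by linarith
  then show ?thesis
    by cases (auto simp: hsin_pos hcos_pos hsin_neg hcos_neg field_simps mult.assoc[symmetric]
        intro!: derivative_eq_intros)
qed

lemma has_real_derivative_hsin_sq_primitive:
  "(hsin_sq_primitive g has_real_derivative (hsin g t)\<^sup>2) (at t within s)"
proof (cases "g = 0")
  case True
  then show ?thesis unfolding hsin_sq_primitive_def hsin_def
    by (auto intro!: derivative_eq_intros simp: power2_eq_square)
next
  case False
  have "((\<lambda>t. (t - hsin g t * hcos g t) / (2 * g)) has_real_derivative
      (1 - (hcos g t * hcos g t + (- g * hsin g t) * hsin g t)) / (2 * g)) (at t within s)"
    by (intro DERIV_cdivide DERIV_diff DERIV_ident DERIV_mult has_real_derivative_hsin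
        has_real_derivative_hcos)
  moreover have "(1 - (hcos g t * hcos g t + (- g * hsin g t) * hsin g t)) / (2 * g) = (hsin g t)\<^sup>2"
    using hcos_sq_plus_hsin_sq[of g t] False by (simp add: field_simps power2_eq_square)
  ultimately show ?thesis using False unfolding hsin_sq_primitive_def by simp
qed

lemma x_cos_le_sin:
  assumes "0 < x" "x < pi / 2"
  shows "x * cos x \<le> sin x"
proof -
  obtain z where z: "0 < z" "z < x" "sin x - sin 0 = (x - 0) * cos z"
    using MVT2[of 0 x sin cos] assms by (auto intro: DERIV_sin)
  have "cos x \<le> cos z"
    using z assms by (intro cos_monotone_0_pi_le) auto
  with z assms show ?thesis by (simp add: mult_left_mono)
qed

lemma sinh_le_x_cosh:
  fixes x :: real
  assumes "0 < x"
  shows "sinh x \<le> x * cosh x"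
proof -
  have "(sinh has_real_derivative cosh t) (at t)" for t :: real
    using has_field_derivative_sinh[OF DERIV_ident] by simp
  then obtain z where z: "0 < z" "z < x" "sinh x - sinh 0 = (x - 0) * cosh z"
    using MVT2[of 0 x "sinh :: real \<Rightarrow> real" cosh] assms by blast
  have "cosh z \<le> cosh x"
    using z by (subst cosh_real_nonneg_le_iff) auto
  with z assms show ?thesis by (simp add: mult_left_mono)
qed

lemma hcos_1_pos:
  assumes "g < pi\<^sup>2 / 4"
  shows "0 < hcos g 1"
proof (cases "g > 0")
  case True
  have "sqrt g < sqrt (pi\<^sup>2 / 4)" using assms by (intro real_sqrt_less_mono)
  also have "\<dots> = pi / 2" by (simp add: real_sqrt_divide)
  finally show ?thesis
    using True by (simp add: hcos_pos cos_gt_zero)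
next
  case False
  then consider "g < 0" | "g = 0" by linarith
  then show ?thesis by cases (simp_all add: hcos_neg)
qed

lemma hcos_le_hsin_1:
  assumes "0 < g" "g < pi\<^sup>2 / 4"
  shows "hcos g 1 \<le> hsin g 1"
proof -
  have "sqrt g < sqrt (pi\<^sup>2 / 4)" using assms by (intro real_sqrt_less_mono)
  also have "\<dots> = pi / 2" by (simp add: real_sqrt_divide)
  finally have "sqrt g * cos (sqrt g) \<le> sin (sqrt g)"
    using assms by (intro x_cos_le_sin) auto
  with assms show ?thesis
    by (simp add: hsin_pos hcos_pos pos_le_divide_eq mult.commute)
qed

lemma hsin_le_hcos_1:
  assumes "g < 0"
  shows "hsin g 1 \<le> hcos g 1"
  using sinh_le_x_cosh[of "sqrt (- g)"] assms
  by (simp add: hsin_neg hcos_neg pos_divide_le_eq mult.commute)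

lemma has_integral_hsin_sq:
  assumes "c \<le> d"
  shows "((\<lambda>x. (hsin g (x - \<tau>))\<^sup>2) has_integral
           hsin_sq_primitive g (d - \<tau>) - hsin_sq_primitive g (c - \<tau>)) {c..d}"
proof (rule fundamental_theorem_of_calculus[OF assms])
  fix x
  have "((\<lambda>x. x - \<tau>) has_real_derivative 1) (at x within {c..d})"
    by (auto intro!: derivative_eq_intros)
  from DERIV_chain2[OF has_real_derivative_hsin_sq_primitive this]
  show "((\<lambda>x. hsin_sq_primitive g (x - \<tau>)) has_vector_derivative (hsin g (x - \<tau>))\<^sup>2) (at x within {c..d})"
    by (simp add: has_real_derivative_iff_has_vector_derivative)
qed

lemma harmonic_ode_solution:
  fixes v v' :: "real \<Rightarrow> 'a::real_normed_vector"
  assumes v: "\<And>t. t \<in> {c..d} \<Longrightarrow> (v has_vector_derivative v' t) (at t within {c..d})"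
    and v': "\<And>t. t \<in> {c..d} \<Longrightarrow> (v' has_vector_derivative (- g) *\<^sub>R v t) (at t within {c..d})"
    and \<tau>: "\<tau> \<in> {c..d}" and x: "x \<in> {c..d}"
  shows "v x = hcos g (x - \<tau>) *\<^sub>R v \<tau> + hsin g (x - \<tau>) *\<^sub>R v' \<tau>"
    and "v' x = hcos g (x - \<tau>) *\<^sub>R v' \<tau> - (g * hsin g (x - \<tau>)) *\<^sub>R v \<tau>"
proof -
  define S where "S = (\<lambda>t. hsin g (t - \<tau>))"
  define C where "C = (\<lambda>t. hcos g (t - \<tau>))"
  have S: "(S has_real_derivative C t) (at t within {c..d})"
    and C: "(C has_real_derivative - g * S t) (at t within {c..d})" for t
  proof -
    have shift: "((\<lambda>t. t - \<tau>) has_real_derivative 1) (at t within {c..d})"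
      by (auto intro!: derivative_eq_intros)
    show "(S has_real_derivative C t) (at t within {c..d})"
      using DERIV_chain2[OF has_real_derivative_hsin shift] by (simp add: S_def C_def)
    show "(C has_real_derivative - g * S t) (at t within {c..d})"
      using DERIV_chain2[OF has_real_derivative_hcos shift] by (simp add: S_def C_def)
  qed
  \<comment> \<open>the Wronskians of v with the two fundamental solutions are constant\<close>
  define W1 where "W1 t = C t *\<^sub>R v t - S t *\<^sub>R v' t" for t
  define W2 where "W2 t = (g * S t) *\<^sub>R v t + C t *\<^sub>R v' t" for t
  have "(W1 has_vector_derivative 0) (at t within {c..d})"
    and "(W2 has_vector_derivative 0) (at t within {c..d})" if "t \<in> {c..d}" for t
    unfolding W1_def W2_def
    by (auto intro!: derivative_eq_intros has_vector_derivative_scaleR S C v v' that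
        simp: algebra_simps)
  then obtain k1 k2 where "\<And>t. t \<in> {c..d} \<Longrightarrow> W1 t = k1" "\<And>t. t \<in> {c..d} \<Longrightarrow> W2 t = k2"
    by (metis convex_real_interval(5) has_vector_derivative_zero_constant)
  then have W1: "W1 x = v \<tau>" and W2: "W2 x = v' \<tau>"
    using \<tau> x by (force simp: W1_def W2_def S_def C_def)+
  have CS: "(C x)\<^sup>2 + g * (S x)\<^sup>2 = 1"
    unfolding S_def C_def by (rule hcos_sq_plus_hsin_sq)
  have "v x = ((C x)\<^sup>2 + g * (S x)\<^sup>2) *\<^sub>R v x" using CS by simp
  also have "\<dots> = C x *\<^sub>R W1 x + S x *\<^sub>R W2 x"
    by (simp add: W1_def W2_def algebra_simps power2_eq_square)
  finally show "v x = hcos g (x - \<tau>) *\<^sub>R v \<tau> + hsin g (x - \<tau>) *\<^sub>R v' \<tau>"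
    by (simp add: W1 W2 S_def C_def)
  have "v' x = ((C x)\<^sup>2 + g * (S x)\<^sup>2) *\<^sub>R v' x" using CS by simp
  also have "\<dots> = C x *\<^sub>R W2 x - (g * S x) *\<^sub>R W1 x"
    by (simp add: W1_def W2_def algebra_simps power2_eq_square)
  finally show "v' x = hcos g (x - \<tau>) *\<^sub>R v' \<tau> - (g * hsin g (x - \<tau>)) *\<^sub>R v \<tau>"
    by (simp add: W1 W2 S_def C_def)
qed

section \<open>The eigenvalue problem with a step weight\<close>

definition is_solution_with_derivative :: "real \<Rightarrow> real \<Rightarrow> (real \<Rightarrow> real) \<Rightarrow> (real \<Rightarrow> real) \<Rightarrow> real \<Rightarrow>
    (real \<Rightarrow> complex) \<Rightarrow> (real \<Rightarrow> complex) \<Rightarrow> bool" where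
  "is_solution_with_derivative a b w q lam y y' \<longleftrightarrow>
     (\<forall>x\<in>{a..b}. (y has_vector_derivative y' x) (at x within {a..b})) \<and>
     continuous_on {a..b} y' \<and> abs_cont_on a b y' \<and>
     (AE x in lborel. x \<in> {a<..<b} \<longrightarrow>
        (y' has_vector_derivative (- complex_of_real (lam * w x + q x) * y x)) (at x))"

lemma is_solution_iff:
  "is_solution a b w q lam y \<longleftrightarrow> (\<exists>y'. is_solution_with_derivative a b w q lam y y')"
  unfolding is_solution_def is_solution_with_derivative_def ..

lemma is_solution_with_derivative_const_coeff:
  assumes sol: "is_solution_with_derivative a b w q lam y y'"
    and sub: "a \<le> c" "c \<le> d" "d \<le> b"
    and const: "\<And>x. x \<in> {c<..<d} \<Longrightarrow> lam * w x + q x = g"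
    and \<tau>: "\<tau> \<in> {c..d}" and x: "x \<in> {c..d}"
  shows "y x = hcos g (x - \<tau>) *\<^sub>R y \<tau> + hsin g (x - \<tau>) *\<^sub>R y' \<tau>"
    and "y' x = hcos g (x - \<tau>) *\<^sub>R y' \<tau> - (g * hsin g (x - \<tau>)) *\<^sub>R y \<tau>"
proof -
  have y: "\<And>x. x \<in> {a..b} \<Longrightarrow> (y has_vector_derivative y' x) (at x within {a..b})"
    and "abs_cont_on a b y'"
    and "AE x in lborel. x \<in> {a<..<b} \<longrightarrow>
          (y' has_vector_derivative (- complex_of_real (lam * w x + q x) * y x)) (at x)"
    using sol by (auto simp: is_solution_with_derivative_def)
  then obtain N where N: "N \<in> null_sets lborel"
    and y'N: "\<And>x. x \<in> {a<..<b} \<Longrightarrow> x \<notin> N \<Longrightarrow>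
       (y' has_vector_derivative (- complex_of_real (lam * w x + q x) * y x)) (at x)"
    by (auto elim!: AE_E3)
  have y_cd: "(y has_vector_derivative y' t) (at t within {c..d})" if "t \<in> {c..d}" for t
    using y[of t] sub that by (auto intro: has_vector_derivative_within_subset)
  have "continuous_on {c..d} y"
    using y_cd by (meson continuous_on_eq_continuous_within has_vector_derivative_continuous)
  have y'_cd: "(y' has_vector_derivative (- g) *\<^sub>R y t) (at t within {c..d})" if "t \<in> {c..d}" for t
  proof (rule abs_cont_on_ae_derivative_continuous[OF _ _ N _ that])
    show "abs_cont_on c d y'"
      using \<open>abs_cont_on a b y'\<close> sub(1,3) by (rule abs_cont_on_subinterval)
    show "continuous_on {c..d} (\<lambda>t. (- g) *\<^sub>R y t)"
      using \<open>continuous_on {c..d} y\<close> by (intro continuous_intros)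
    fix s
    assume s: "s \<in> {c<..<d}" "s \<notin> N"
    with sub have "(y' has_vector_derivative (- complex_of_real (lam * w s + q s) * y s)) (at s)"
      by (intro y'N) auto
    then show "(y' has_vector_derivative (- g) *\<^sub>R y s) (at s)"
      unfolding const[OF s(1)] by (simp add: scaleR_conv_of_real)
  qed
  show "y x = hcos g (x - \<tau>) *\<^sub>R y \<tau> + hsin g (x - \<tau>) *\<^sub>R y' \<tau>"
    and "y' x = hcos g (x - \<tau>) *\<^sub>R y' \<tau> - (g * hsin g (x - \<tau>)) *\<^sub>R y \<tau>"
    using harmonic_ode_solution[OF y_cd y'_cd \<tau> x] by simp_all
qed

lemma hsin_sq_primitive_bound:
  fixes \<alpha> \<beta> :: real
  assumes "\<alpha> < pi\<^sup>2 / 4" "\<bar>\<alpha>\<bar> < \<beta>"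
  defines "s \<equiv> hsin \<alpha> 1" and "c \<equiv> hcos \<alpha> 1"
  shows "2 * \<beta> * hsin_sq_primitive \<alpha> 1 < \<beta> * s\<^sup>2 + c\<^sup>2 + s * c"
proof -
  have c: "0 < c" unfolding c_def using assms(1) by (rule hcos_1_pos)
  have "c\<^sup>2 + \<alpha> * s\<^sup>2 = 1" unfolding s_def c_def by (rule hcos_sq_plus_hsin_sq)
  then have "\<alpha> * (\<beta> * s\<^sup>2 + c\<^sup>2 + s * c) - \<beta> * (1 - s * c)
      = \<alpha> * (\<beta> * s\<^sup>2 + c\<^sup>2 + s * c) - \<beta> * (c\<^sup>2 + \<alpha> * s\<^sup>2 - s * c)"
    by simp
  also have "\<dots> = c * ((\<alpha> + \<beta>) * s - (\<beta> - \<alpha>) * c)"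
    by (simp add: algebra_simps power2_eq_square)
  finally have key: "\<alpha> * (\<beta> * s\<^sup>2 + c\<^sup>2 + s * c) - \<beta> * (1 - s * c) = c * ((\<alpha> + \<beta>) * s - (\<beta> - \<alpha>) * c)" .
  have P: "2 * \<beta> * hsin_sq_primitive \<alpha> 1 = \<beta> * (1 - s * c) / \<alpha>" if "\<alpha> \<noteq> 0"
    using that by (simp add: hsin_sq_primitive_def s_def c_def)
  consider "0 < \<alpha>" | "\<alpha> < 0" | "\<alpha> = 0" by linarith
  then show ?thesis
  proof cases
    case 1
    have "(\<beta> - \<alpha>) * c < (\<alpha> + \<beta>) * c" using 1 c by (intro mult_strict_right_mono) auto
    also have "\<dots> \<le> (\<alpha> + \<beta>) * s"
      using hcos_le_hsin_1[OF 1 assms(1)] assms(2) by (intro mult_left_mono) (auto simp: s_def c_def)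
    finally have "0 < c * ((\<alpha> + \<beta>) * s - (\<beta> - \<alpha>) * c)" using c by simp
    with key have "\<beta> * (1 - s * c) < \<alpha> * (\<beta> * s\<^sup>2 + c\<^sup>2 + s * c)" by linarith
    with 1 have "\<beta> * (1 - s * c) / \<alpha> < \<beta> * s\<^sup>2 + c\<^sup>2 + s * c"
      by (simp add: pos_divide_less_eq mult.commute)
    with 1 show ?thesis by (simp add: P)
  next
    case 2
    have "(\<alpha> + \<beta>) * s \<le> (\<alpha> + \<beta>) * c"
      using hsin_le_hcos_1[OF 2] assms(2) by (intro mult_left_mono) (auto simp: s_def c_def)
    also have "\<dots> < (\<beta> - \<alpha>) * c" using 2 c by (intro mult_strict_right_mono) auto
    finally have "c * ((\<alpha> + \<beta>) * s - (\<beta> - \<alpha>) * c) < 0" using c by (simp add: mult_pos_neg)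
    with key have "\<alpha> * (\<beta> * s\<^sup>2 + c\<^sup>2 + s * c) < \<beta> * (1 - s * c)" by linarith
    with 2 have "\<beta> * (1 - s * c) / \<alpha> < \<beta> * s\<^sup>2 + c\<^sup>2 + s * c"
      by (simp add: neg_divide_less_eq mult.commute)
    with 2 show ?thesis by (simp add: P)
  next
    case 3
    then show ?thesis using assms(2) by (simp add: hsin_sq_primitive_def s_def c_def)
  qed
qed

text \<open>The hypotheses on \<open>k\<close> say that $x \mapsto$ \<open>hsin \<alpha> (x - 1)\<close> on $[0,1]$ and
  $x \mapsto k \cdot$ \<open>hsin \<beta> (x + 1)\<close> on $[-1,0]$ join to a $C^1$ function.\<close>

lemma hsin_sq_primitive_matching_bound:
  fixes \<alpha> \<beta> k :: real
  assumes "\<alpha> < pi\<^sup>2 / 4" "\<bar>\<alpha>\<bar> < \<beta>"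
    and "hsin \<beta> 1 * k = - hsin \<alpha> 1" "hcos \<beta> 1 * k = hcos \<alpha> 1"
  shows "hsin_sq_primitive \<alpha> 1 < k\<^sup>2 * hsin_sq_primitive \<beta> 1"
proof -
  define s c where "s = hsin \<alpha> 1" and "c = hcos \<alpha> 1"
  have "\<beta> > 0" using assms(2) by linarith
  have "2 * \<beta> * hsin_sq_primitive \<alpha> 1 < \<beta> * s\<^sup>2 + c\<^sup>2 + s * c"
    unfolding s_def c_def using assms(1,2) by (rule hsin_sq_primitive_bound)
  also have "\<dots> = k\<^sup>2 * ((hcos \<beta> 1)\<^sup>2 + \<beta> * (hsin \<beta> 1)\<^sup>2 - hsin \<beta> 1 * hcos \<beta> 1)"
  proof -
    have "s = - (hsin \<beta> 1 * k)" "c = hcos \<beta> 1 * k"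
      using assms(3,4) by (simp_all add: s_def c_def)
    then show ?thesis by (simp add: algebra_simps power2_eq_square)
  qed
  also have "\<dots> = k\<^sup>2 * (2 * \<beta> * hsin_sq_primitive \<beta> 1)"
    using \<open>\<beta> > 0\<close> hcos_sq_plus_hsin_sq[of \<beta> 1] by (simp add: hsin_sq_primitive_def)
  finally show ?thesis
    using \<open>\<beta> > 0\<close> by (simp add: algebra_simps)
qed

lemma scaleR_eq_of_linear_relations:
  fixes A B :: "'a::real_vector"
  assumes "b *\<^sub>R B = - (a *\<^sub>R A)" "d *\<^sub>R B = c *\<^sub>R A" "d\<^sup>2 + \<beta> * b\<^sup>2 = 1"
  shows "B = (c * d - \<beta> * a * b) *\<^sub>R A"
proof -
  have "B = (d\<^sup>2 + \<beta> * b\<^sup>2) *\<^sub>R B" using assms(3) by simp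
  also have "\<dots> = d *\<^sub>R (d *\<^sub>R B) + (\<beta> * b) *\<^sub>R (b *\<^sub>R B)"
    by (simp add: algebra_simps power2_eq_square)
  also have "\<dots> = (c * d - \<beta> * a * b) *\<^sub>R A"
    unfolding assms(1,2) by (simp add: algebra_simps)
  finally show ?thesis .
qed

lemma step_weight_eigenfunction_explicit:
  fixes u :: "real \<Rightarrow> complex"
  assumes "is_eigenfunction (-1) 1 (\<lambda>x. if x \<ge> 0 then 1 else -1) (\<lambda>x. - q0) lam u"
  obtains A :: complex and k :: real where "A \<noteq> 0"
    "\<forall>x\<in>{0..1}. u x = hsin (lam - q0) (x - 1) *\<^sub>R A"
    "\<forall>x\<in>{-1..0}. u x = (k * hsin (- lam - q0) (x + 1)) *\<^sub>R A"
    "hsin (- lam - q0) 1 * k = - hsin (lam - q0) 1"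
    "hcos (- lam - q0) 1 * k = hcos (lam - q0) 1"
proof -
  define \<alpha> \<beta> where "\<alpha> = lam - q0" and "\<beta> = - lam - q0"
  obtain u'
    where sol: "is_solution_with_derivative (-1) 1 (\<lambda>x. if x \<ge> 0 then 1 else -1) (\<lambda>x. - q0) lam u u'"
    and "u (-1) = 0" "u 1 = 0" and nz: "\<exists>x\<in>{-1..1}. u x \<noteq> 0"
    using assms by (auto simp: is_eigenfunction_def is_solution_iff)
  define A B where "A = u' 1" and "B = u' (-1)"
  have const_right: "lam * (if x \<ge> 0 then 1 else -1) + - q0 = \<alpha>" if "x \<in> {0<..<1}" for x :: real
    using that by (auto simp: \<alpha>_def)
  have const_left: "lam * (if x \<ge> 0 then 1 else -1) + - q0 = \<beta>" if "x \<in> {-1<..<0}" for x :: real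
    using that by (auto simp: \<beta>_def)
  have right: "u x = hsin \<alpha> (x - 1) *\<^sub>R A" "u' x = hcos \<alpha> (x - 1) *\<^sub>R A" if "x \<in> {0..1}" for x
    using is_solution_with_derivative_const_coeff[OF sol _ _ _ const_right,
        where c = 0 and d = 1 and \<tau> = 1 and x = x] that \<open>u 1 = 0\<close>
    by (simp_all add: A_def)
  have left: "u x = hsin \<beta> (x + 1) *\<^sub>R B" "u' x = hcos \<beta> (x + 1) *\<^sub>R B" if "x \<in> {-1..0}" for x
    using is_solution_with_derivative_const_coeff[OF sol _ _ _ const_left,
        where c = "-1" and d = 0 and \<tau> = "-1" and x = x] that \<open>u (-1) = 0\<close>
    by (simp_all add: B_def)
  define a c b d where "a = hsin \<alpha> 1" and "c = hcos \<alpha> 1" and "b = hsin \<beta> 1" and "d = hcos \<beta> 1"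
  have match_u: "b *\<^sub>R B = - (a *\<^sub>R A)" and match_u': "d *\<^sub>R B = c *\<^sub>R A"
    using right[of 0] left[of 0] by (simp_all add: a_def b_def c_def d_def)
  define k where "k = c * d - \<beta> * a * b"
  have B: "B = k *\<^sub>R A"
    unfolding k_def using match_u match_u' hcos_sq_plus_hsin_sq[of \<beta> 1]
    by (intro scaleR_eq_of_linear_relations) (simp_all add: b_def d_def)
  have "A \<noteq> 0"
  proof
    assume "A = 0"
    then have "u x = 0" if "x \<in> {-1..1}" for x
      using that right[of x] left[of x] B by (cases "x \<ge> 0") auto
    with nz show False by blast
  qed
  moreover have "(b * k) *\<^sub>R A = (- a) *\<^sub>R A" "(d * k) *\<^sub>R A = c *\<^sub>R A"
    using match_u match_u' by (simp_all add: B)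
  then have "b * k = - a" "d * k = c"
    using \<open>A \<noteq> 0\<close> scaleR_cancel_right by blast+
  ultimately show thesis
    using that[of A k] right left B by (simp add: \<alpha>_def \<beta>_def a_def b_def c_def d_def)
qed

lemma step_weight_eigenfunction_weighted_norm_neg:
  fixes q0 lam :: real and u :: "real \<Rightarrow> complex"
  assumes q0: "q0 < - (pi\<^sup>2 / 4)" and lam: "lam < q0 + pi\<^sup>2 / 4"
    and u: "is_eigenfunction (-1) 1 (\<lambda>x. if x \<ge> 0 then 1 else -1) (\<lambda>x. - q0) lam u"
  shows "integral {-1..1} (\<lambda>x. (if x \<ge> 0 then 1 else -1) * (cmod (u x))\<^sup>2) < 0"
proof -
  define \<alpha> \<beta> where "\<alpha> = lam - q0" and "\<beta> = - lam - q0"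
  obtain A k where "A \<noteq> 0"
    and right: "\<forall>x\<in>{0..1}. u x = hsin \<alpha> (x - 1) *\<^sub>R A"
    and left: "\<forall>x\<in>{-1..0}. u x = (k * hsin \<beta> (x + 1)) *\<^sub>R A"
    and match: "hsin \<beta> 1 * k = - hsin \<alpha> 1" "hcos \<beta> 1 * k = hcos \<alpha> 1"
    using step_weight_eigenfunction_explicit[OF u] unfolding \<alpha>_def \<beta>_def by blast
  define n where "n = (cmod A)\<^sup>2"
  have "n > 0" using \<open>A \<noteq> 0\<close> by (simp add: n_def)
  let ?f = "\<lambda>x. (if x \<ge> 0 then 1 else -1) * (cmod (u x))\<^sup>2"
  have "((\<lambda>x. n * (hsin \<alpha> (x - 1))\<^sup>2) has_integral n * hsin_sq_primitive \<alpha> 1) {0..1}"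
    using has_integral_mult_right[OF has_integral_hsin_sq[of 0 1 \<alpha> 1], of n] by simp
  then have right_int: "(?f has_integral n * hsin_sq_primitive \<alpha> 1) {0..1}"
    by (rule has_integral_spike_finite[OF finite.emptyI, rotated])
      (simp add: right n_def power_mult_distrib)
  have left_sq: "((\<lambda>x. - (k\<^sup>2 * n) * (hsin \<beta> (x + 1))\<^sup>2) has_integral
      - (k\<^sup>2 * n) * hsin_sq_primitive \<beta> 1) {-1..0}"
    using has_integral_mult_right[OF has_integral_hsin_sq[of "-1" 0 \<beta> "-1"], of "- (k\<^sup>2 * n)"] by simp
  have left_int: "(?f has_integral - (k\<^sup>2 * n) * hsin_sq_primitive \<beta> 1) {-1..0}"
    by (rule has_integral_spike_finite[where S = "{0}", OF _ _ left_sq])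
      (auto simp: left n_def power_mult_distrib)
  have "integral {-1..1} ?f = n * (hsin_sq_primitive \<alpha> 1 - k\<^sup>2 * hsin_sq_primitive \<beta> 1)"
    using has_integral_combine[OF _ _ left_int right_int] by (simp add: integral_unique algebra_simps)
  also have "\<dots> < 0"
  proof (rule mult_pos_neg[OF \<open>n > 0\<close>])
    have "0 < pi\<^sup>2 / 4" by simp
    then have "\<alpha> < pi\<^sup>2 / 4" "\<bar>\<alpha>\<bar> < \<beta>"
      using q0 lam unfolding \<alpha>_def \<beta>_def abs_less_iff by linarith+
    with match show "hsin_sq_primitive \<alpha> 1 - k\<^sup>2 * hsin_sq_primitive \<beta> 1 < 0"
      using hsin_sq_primitive_matching_bound by force
  qed
  finally show ?thesis .
qed

theorem mainTheorem5:
  fixes q0 :: real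
  assumes "q0 < - (pi\<^sup>2 / 4)"
  shows "ereal (- \<bar>q0\<bar> + pi\<^sup>2 / 4)
           \<le> richardson_minus (-1) 1 (\<lambda>x. if x \<ge> 0 then 1 else -1) (\<lambda>x. - q0)"
proof -
  have "0 < pi\<^sup>2 / 4" by simp
  with assms have "q0 < 0" by linarith
  then have "- \<bar>q0\<bar> + pi\<^sup>2 / 4 = q0 + pi\<^sup>2 / 4" by simp
  then have "ereal (- \<bar>q0\<bar> + pi\<^sup>2 / 4) \<in> ereal ` {\<rho>. \<forall>lam u.
      is_eigenvalue (-1) 1 (\<lambda>x. if x \<ge> 0 then 1 else -1) (\<lambda>x. - q0) lam \<and> lam < \<rho> \<and>
      is_eigenfunction (-1) 1 (\<lambda>x. if x \<ge> 0 then 1 else -1) (\<lambda>x. - q0) lam u \<longrightarrow>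
      integral {-1..1} (\<lambda>x. (if x \<ge> 0 then 1 else -1) * (cmod (u x))\<^sup>2) < 0}"
    using step_weight_eigenfunction_weighted_norm_neg[OF assms] by auto
  then show ?thesis
    unfolding richardson_minus_def by (rule Sup_upper)
qed

end
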